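(* Let $A\in\mathbb{C}^{m\times n}$ with $\mathrm{rank}(A^{\sim}AA^{\sim})=\mathrm{rank}(A)$ (so that $A^{\mathfrak{m}}$ exists), and let $X\in\mathbb{C}^{n\times m}$. Then the following are equivalent: (1) $X=A^{\mathfrak{m}}$; (2) there exist $B\in\mathbb{C}^{m\times m}$ and $C\in\mathbb{C}^{n\times n}$ such that $AXA=A$, $X=A^{\sim}B$ and $X=CA^{\sim}$. Moreover, such $B$ and $C$ are given by $$B=(A^{\sim})^{(1)}A^{\mathfrak{m}}+(I_m-(A^{\sim})^{(1)}A^{\sim})Y,\qquad C=A^{\mathfrak{m}}(A^{\sim})^{(1)}+Z(I_n-A^{\sim}(A^{\sim})^{(1)}),$$ where $Y\in\mathbb{C}^{m\times m}$ and $Z\in\mathbb{C}^{n\times n}$ are arbitrary and $(A^{\sim})^{(1)}$ is a $\{1\}$-inverse of $A^{\sim}$.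
   Context: For a positive integer $k$, the Minkowski metric matrix of order $k$ is $G_k=\mathrm{diag}(1,-I_{k-1})$ (with $G_1=(1)$). For $A\in\mathbb{C}^{m\times n}$, the Minkowski adjoint is $A^{\sim}=G_nA^*G_m$, where $A^*$ is the conjugate transpose. The Minkowski inverse of $A$, denoted $A^{\mathfrak{m}}$, is the (unique) matrix $X\in\mathbb{C}^{n\times m}$ with $AXA=A$, $XAX=X$, $(AX)^{\sim}=AX$, $(XA)^{\sim}=XA$, when it exists. A $\{1\}$-inverse of a matrix $M$ is any $M^{(1)}$ with $MM^{(1)}M=M$. *)

theory Defs
  imports "Jordan_Normal_Form.Schur_Decomposition" "Jordan_Normal_Form.DL_Rank"
begin

definition minkowski_metric :: "nat \<Rightarrow> complex mat" where
  "minkowski_metric k = mat k k (\<lambda>(i,j). if i = j then (if i = 0 then 1 else -1) else 0)"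

definition minkowski_adjoint :: "complex mat \<Rightarrow> complex mat" where
  "minkowski_adjoint A =
     minkowski_metric (dim_col A) * mat_adjoint A * minkowski_metric (dim_row A)"

definition is_minkowski_inverse :: "complex mat \<Rightarrow> complex mat \<Rightarrow> bool" where
  "is_minkowski_inverse A X \<longleftrightarrow>
     X \<in> carrier_mat (dim_col A) (dim_row A) \<and>
     A * X * A = A \<and> X * A * X = X \<and>
     minkowski_adjoint (A * X) = A * X \<and> minkowski_adjoint (X * A) = X * A"

definition minkowski_inverse :: "complex mat \<Rightarrow> complex mat" where
  "minkowski_inverse A = (THE X. is_minkowski_inverse A X)"

end

theory Submission
  imports Defs
begin

(* Right multiplication of A~ by A A~ loses no rank, so the rank condition gives
   A~ = A~ A A~ U; since the Minkowski adjoint preserves rank, also A = A A~ A W.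
   Then X = A~ U = W~ A~ satisfies A X A = A.  Any solution of A X A = A of the form
   X = A~ B = C A~ is the Minkowski inverse: A X = A X (A X)~ and X A = (X A)~ X A force
   A X and X A to be self-adjoint, and then X A X = X.  By Penrose's uniqueness argument
   this characterises A^m.  Finally, if G is a {1}-inverse of A~, then
   A~ (G X + (I - G A~) Y) = X for every X = A~ P, and dually on the right; applied to
   A^m = A~ (A^m~ A^m) = (A^m A^m~) A~ this gives the stated B and C. *)

lemma (in vectorspace) subspace_eq_carrier_of_dim_le:
  assumes X: "VectorSpace.subspace K X V" and fin: "fin_dim" "vectorspace.fin_dim K (vs X)"
    and le: "dim \<le> vectorspace.dim K (vs X)"
  shows "X = carrier V"
proof -
  interpret X: vectorspace K "vs X" using subspace_is_vs[OF X] .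
  have sm: "submodule K X V" using X by simp
  have XV: "X \<subseteq> carrier V" using submodule.subset[OF sm] .
  obtain b where b: "finite b" "X.basis b" using X.finite_basis_exists fin(2) by blast
  have bX: "b \<subseteq> X" and "X.lin_indpt b" using b(2) unfolding X.basis_def by auto
  then have li: "lin_indpt b" using span_li_not_depend(2)[OF bX sm] by simp
  have "card b = X.dim" using X.dim_basis b by simp
  then have "basis b" using dim_li_is_basis[OF fin(1) b(1) _ li] bX XV le by auto
  then have "carrier V = span b" unfolding basis_def by simp
  also have "\<dots> \<subseteq> X" using span_is_subset[OF bX sm] .
  finally show ?thesis using XV by blast
qed

context vec_space
begin

lemma col_space_subspace:
  assumes "A \<in> carrier_mat n a"
  shows "VectorSpace.subspace class_ring (col_space A) V"
  unfolding col_space_def using assms by (intro span_is_subspace) (auto simp: cols_def)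

lemma col_space_subset_iff_factor:
  assumes A: "A \<in> carrier_mat n a" and B: "B \<in> carrier_mat n b"
  shows "col_space A \<subseteq> col_space B \<longleftrightarrow> (\<exists>U\<in>carrier_mat b a. A = B * U)"
proof
  assume sub: "col_space A \<subseteq> col_space B"
  have "\<exists>x\<in>carrier_vec b. B *\<^sub>v x = col A j" if "j < a" for j
  proof -
    have "col A j \<in> set (cols A)" using A that by (simp add: cols_def)
    also have "set (cols A) \<subseteq> col_space A"
      unfolding col_space_def using A by (intro in_own_span) (auto simp: cols_def)
    finally show ?thesis using sub col_space_eq[OF B] B by auto
  qed
  then obtain f where f: "\<And>j. j < a \<Longrightarrow> f j \<in> carrier_vec b \<and> B *\<^sub>v f j = col A j"
    by metis
  define U where "U = mat_of_cols b (map f [0..<a])"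
  have U: "U \<in> carrier_mat b a"
    unfolding U_def using mat_of_cols_carrier(1)[of b "map f [0..<a]"] by simp
  have "A = B * U"
  proof (rule mat_col_eqI)
    fix j assume "j < dim_col (B * U)"
    then have j: "j < a" using U by simp
    have "col (B * U) j = B *\<^sub>v col U j" using col_mult2[OF B U j] .
    also have "col U j = f j" using j f unfolding U_def by (simp add: col_mat_of_cols)
    finally show "col A j = col (B * U) j" using f j by simp
  qed (use A B U in auto)
  with U show "\<exists>U\<in>carrier_mat b a. A = B * U" by blast
next
  assume "\<exists>U\<in>carrier_mat b a. A = B * U"
  then obtain U where U: "U \<in> carrier_mat b a" and AU: "A = B * U" by blast
  show "col_space A \<subseteq> col_space B"
  proof
    fix y assume "y \<in> col_space A"
    then obtain x where x: "x \<in> carrier_vec a" and y: "y = A *\<^sub>v x"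
      using col_space_eq[OF A] A by auto
    have "y = B *\<^sub>v (U *\<^sub>v x)" using y AU B U x by (simp add: assoc_mult_mat_vec)
    then show "y \<in> col_space B" using col_space_eq[OF B] B U x by auto
  qed
qed

lemma rank_le_of_col_space_subset:
  assumes A: "A \<in> carrier_mat n a" and B: "B \<in> carrier_mat n b"
    and sub: "col_space A \<subseteq> col_space B"
  shows "rank A \<le> rank B"
proof -
  have "VectorSpace.subspace class_ring (col_space A) (vs (col_space B))"
    using nested_subspaces col_space_subspace A B sub by blast
  then show ?thesis
    using vectorspace.subspace_dim[OF subspace_is_vs[OF col_space_subspace[OF B]]]
      fin_dim_span_cols[OF A] fin_dim_span_cols[OF B]
    unfolding rank_def col_space_def by simp
qed

lemma col_space_eq_of_subset_rank_le:
  assumes A: "A \<in> carrier_mat n a" and B: "B \<in> carrier_mat n b"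
    and sub: "col_space A \<subseteq> col_space B" and le: "rank B \<le> rank A"
  shows "col_space A = col_space B"
proof -
  have "VectorSpace.subspace class_ring (col_space A) (vs (col_space B))"
    using nested_subspaces col_space_subspace A B sub by blast
  then show ?thesis
    using vectorspace.subspace_eq_carrier_of_dim_le[OF subspace_is_vs[OF col_space_subspace[OF B]]]
      fin_dim_span_cols[OF A] fin_dim_span_cols[OF B] le
    unfolding rank_def col_space_def by simp
qed

lemma rank_mult_le:
  assumes "B \<in> carrier_mat n b" and "U \<in> carrier_mat b a"
  shows "rank (B * U) \<le> rank B"
  using assms rank_le_of_col_space_subset[of "B * U" a B b]
    col_space_subset_iff_factor[of "B * U" a B b]
  by auto

lemma factors_through_mult_of_rank_le:
  assumes B: "B \<in> carrier_mat n b" and U: "U \<in> carrier_mat b a"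
    and le: "rank B \<le> rank (B * U)"
  shows "\<exists>W\<in>carrier_mat a b. B = B * U * W"
proof -
  have BU: "B * U \<in> carrier_mat n a" using B U by simp
  have "col_space (B * U) \<subseteq> col_space B"
    using col_space_subset_iff_factor[OF BU B] U by blast
  then have "col_space B \<subseteq> col_space (B * U)"
    using col_space_eq_of_subset_rank_le[OF BU B _ le] by simp
  then show ?thesis using col_space_subset_iff_factor[OF B BU] by blast
qed

lemma rank_factorization:
  assumes P: "P \<in> carrier_mat n k"
  shows "\<exists>C\<in>carrier_mat n (rank P). \<exists>R\<in>carrier_mat (rank P) k. P = C * R"
proof -
  have "lin_indpt {}" by (simp add: lin_dep_def)
  then have "\<exists>S. finite S \<and> maximal S (\<lambda>T. T \<subseteq> set (cols P) \<and> lin_indpt T) \<and> {} \<subseteq> S"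
    by (intro maximal_exists_superset[of "set (cols P)"]) auto
  then obtain S where S: "maximal S (\<lambda>T. T \<subseteq> set (cols P) \<and> lin_indpt T)" "finite S"
    by blast
  have SP: "S \<subseteq> set (cols P)" and li: "lin_indpt S" using S(1) unfolding maximal_def by auto
  obtain xs where xs: "set xs = S" "distinct xs" using finite_distinct_list[OF S(2)] by blast
  have "length xs = rank P" using rank_card_indpt[OF P S(1)] xs distinct_card by metis
  then have C: "mat_of_cols n xs \<in> carrier_mat n (rank P)"
    using mat_of_cols_carrier(1)[of n xs] by simp
  have cols: "cols (mat_of_cols n xs) = xs"
    using xs SP P by (intro cols_mat_of_cols) (auto simp: cols_def)
  have "col_space (mat_of_cols n xs) \<subseteq> col_space P"
    unfolding col_space_def cols using xs SP by (simp add: span_is_monotone)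
  moreover have "rank P \<le> rank (mat_of_cols n xs)"
    using rank_ge_card_indpt[OF C, of S] cols xs li rank_card_indpt[OF P S(1)] by simp
  ultimately have "col_space P \<subseteq> col_space (mat_of_cols n xs)"
    using col_space_eq_of_subset_rank_le[OF C P] by simp
  then show ?thesis using col_space_subset_iff_factor[OF P C] C by blast
qed

end

lemma mat_mult_assoc:
  "dim_col A = dim_row B \<Longrightarrow> dim_col B = dim_row C \<Longrightarrow> A * B * C = A * (B * C)"
  by (rule assoc_mult_mat[of A "dim_row A" "dim_col A" B "dim_col B" C "dim_col C"]) auto

lemma one_inverse_solves_left:
  fixes D :: "'a :: comm_ring_1 mat"
  assumes D: "D \<in> carrier_mat n m" and G: "G \<in> carrier_mat m n"
    and P: "P \<in> carrier_mat m k" and Y: "Y \<in> carrier_mat m k"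
    and DGD: "D * G * D = D"
  shows "D * (G * (D * P) + (1\<^sub>m m - G * D) * Y) = D * P"
proof -
  note dims = carrier_matD[OF D] carrier_matD[OF G] carrier_matD[OF P] carrier_matD[OF Y]
  have "D * (1\<^sub>m m - G * D) = D * 1\<^sub>m m - D * G * D"
    using mult_minus_distrib_mat[OF D one_carrier_mat mult_carrier_mat[OF G D]]
    by (simp add: mat_mult_assoc dims)
  also have "\<dots> = 0\<^sub>m n m" using D DGD by simp
  finally have "D * ((1\<^sub>m m - G * D) * Y) = 0\<^sub>m n k"
    using Y by (simp add: dims flip: mat_mult_assoc)
  moreover have "D * (G * (D * P)) = D * P"
    using DGD by (simp add: dims flip: mat_mult_assoc)
  ultimately show ?thesis
    using mult_add_distrib_mat[OF D mult_carrier_mat[OF G mult_carrier_mat[OF D P]]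
        mult_carrier_mat[OF minus_carrier_mat[OF mult_carrier_mat[OF G D]] Y]]
      mult_carrier_mat[OF D P]
    by simp
qed

lemma one_inverse_solves_right:
  fixes D :: "'a :: comm_ring_1 mat"
  assumes D: "D \<in> carrier_mat n m" and G: "G \<in> carrier_mat m n"
    and P: "P \<in> carrier_mat k n" and Z: "Z \<in> carrier_mat k n"
    and DGD: "D * G * D = D"
  shows "(P * D * G + Z * (1\<^sub>m n - D * G)) * D = P * D"
proof -
  note dims = carrier_matD[OF D] carrier_matD[OF G] carrier_matD[OF P] carrier_matD[OF Z]
  have "(1\<^sub>m n - D * G) * D = 1\<^sub>m n * D - D * G * D"
    using minus_mult_distrib_mat[OF one_carrier_mat mult_carrier_mat[OF D G] D] by simp
  also have "\<dots> = 0\<^sub>m n m" using D DGD by simp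
  finally have "Z * (1\<^sub>m n - D * G) * D = 0\<^sub>m k m"
    using Z by (simp add: dims mat_mult_assoc)
  moreover have "P * D * G * D = P * D"
    using DGD by (simp add: dims mat_mult_assoc)
  ultimately show ?thesis
    using add_mult_distrib_mat[OF mult_carrier_mat[OF mult_carrier_mat[OF P D] G]
        mult_carrier_mat[OF Z minus_carrier_mat[OF mult_carrier_mat[OF D G]]] D]
      mult_carrier_mat[OF P D]
    by simp
qed

notation minkowski_adjoint ("_\<^sup>\<sim>" [1000] 1000)

definition minkowski_sign :: "nat \<Rightarrow> complex" where
  "minkowski_sign i = (if i = 0 then 1 else -1)"

lemma minkowski_sign_square [simp]:
  "minkowski_sign i * minkowski_sign i = 1"
  "minkowski_sign i * (minkowski_sign i * z) = z"
  unfolding minkowski_sign_def by simp_all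

lemma cnj_minkowski_sign [simp]: "cnj (minkowski_sign i) = minkowski_sign i"
  unfolding minkowski_sign_def by simp

lemma minkowski_metric_eq_mat_diag: "minkowski_metric k = mat_diag k minkowski_sign"
  unfolding minkowski_metric_def mat_diag_def minkowski_sign_def by (rule eq_matI) auto

lemma minkowski_adjoint_eq_mat:
  "A\<^sup>\<sim> = mat (dim_col A) (dim_row A)
     (\<lambda>(i, j). minkowski_sign i * minkowski_sign j * cnj (A $$ (j, i)))"
proof -
  let ?D = "mat_adjoint A"
  have D: "?D \<in> carrier_mat (dim_col A) (dim_row A)"
    unfolding mat_adjoint_def by (intro carrier_matI) (auto simp: mat_of_rows_def)
  have D_index: "?D $$ (i, j) = cnj (A $$ (j, i))" if "i < dim_col A" "j < dim_row A" for i j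
    unfolding mat_adjoint_def using that by (simp add: mat_of_rows_index)
  show ?thesis
    unfolding minkowski_adjoint_def minkowski_metric_eq_mat_diag
      mat_diag_mult_left[OF D] mat_diag_mult_right[OF mat_carrier]
    using D_index by (intro eq_matI) auto
qed

lemma dim_minkowski_adjoint [simp]:
  "dim_row (A\<^sup>\<sim>) = dim_col A" "dim_col (A\<^sup>\<sim>) = dim_row A"
  by (simp_all add: minkowski_adjoint_def minkowski_metric_def)

lemma minkowski_adjoint_carrier [simp]: "A \<in> carrier_mat m n \<Longrightarrow> A\<^sup>\<sim> \<in> carrier_mat n m"
  by (intro carrier_matI) auto

lemma minkowski_adjoint_adjoint [simp]: "A\<^sup>\<sim>\<^sup>\<sim> = A"
  by (rule eq_matI) (simp_all add: minkowski_adjoint_eq_mat mult_ac)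

lemma minkowski_adjoint_mult:
  assumes AB: "dim_col A = dim_row B"
  shows "(A * B)\<^sup>\<sim> = B\<^sup>\<sim> * A\<^sup>\<sim>"
proof (rule eq_matI)
  let ?s = minkowski_sign
  fix i j assume "i < dim_row (B\<^sup>\<sim> * A\<^sup>\<sim>)" "j < dim_col (B\<^sup>\<sim> * A\<^sup>\<sim>)"
  then have i: "i < dim_col B" and j: "j < dim_row A" by auto
  have "(A * B)\<^sup>\<sim> $$ (i, j) = ?s i * ?s j * cnj (\<Sum>t<dim_col A. A $$ (j, t) * B $$ (t, i))"
    using i j AB by (simp add: minkowski_adjoint_eq_mat scalar_prod_def atLeast0LessThan)
  also have "\<dots> = (\<Sum>t<dim_col A.
      (?s i * ?s t * cnj (B $$ (t, i))) * (?s t * ?s j * cnj (A $$ (j, t))))"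
    by (simp add: sum_distrib_left mult_ac)
  also have "\<dots> = (B\<^sup>\<sim> * A\<^sup>\<sim>) $$ (i, j)"
    using i j AB by (simp add: minkowski_adjoint_eq_mat scalar_prod_def atLeast0LessThan)
  finally show "(A * B)\<^sup>\<sim> $$ (i, j) = (B\<^sup>\<sim> * A\<^sup>\<sim>) $$ (i, j)" .
qed (simp_all add: AB)

lemma minkowski_adjoint_fixed_of_eq_mult_adjoint:
  assumes "P = P * P\<^sup>\<sim>"
  shows "P\<^sup>\<sim> = P"
proof -
  have "P\<^sup>\<sim> = (P * P\<^sup>\<sim>)\<^sup>\<sim>" using assms by simp
  also have "\<dots> = P * P\<^sup>\<sim>" by (simp add: minkowski_adjoint_mult)
  finally show ?thesis using assms by simp
qed

lemma minkowski_adjoint_fixed_of_eq_adjoint_mult: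
  assumes "P = P\<^sup>\<sim> * P"
  shows "P\<^sup>\<sim> = P"
proof -
  have "P\<^sup>\<sim> = (P\<^sup>\<sim> * P)\<^sup>\<sim>" using assms by simp
  also have "\<dots> = P\<^sup>\<sim> * P" by (simp add: minkowski_adjoint_mult)
  finally show ?thesis using assms by simp
qed

lemma rank_minkowski_adjoint_le:
  assumes P: "P \<in> carrier_mat k l"
  shows "vec_space.rank l (P\<^sup>\<sim>) \<le> vec_space.rank k P"
proof -
  obtain C R where C: "C \<in> carrier_mat k (vec_space.rank k P)"
    and R: "R \<in> carrier_mat (vec_space.rank k P) l" and PCR: "P = C * R"
    using vec_space.rank_factorization[OF P] by blast
  have "vec_space.rank l (P\<^sup>\<sim>) = vec_space.rank l (R\<^sup>\<sim> * C\<^sup>\<sim>)"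
    using PCR minkowski_adjoint_mult C R by simp
  also have "\<dots> \<le> vec_space.rank l (R\<^sup>\<sim>)"
    using C R by (intro vec_space.rank_mult_le) auto
  also have "\<dots> \<le> vec_space.rank k P"
    using R by (intro vec_space.rank_le_nc) auto
  finally show ?thesis .
qed

lemma rank_minkowski_adjoint:
  assumes "P \<in> carrier_mat k l"
  shows "vec_space.rank l (P\<^sup>\<sim>) = vec_space.rank k P"
  using rank_minkowski_adjoint_le[of P k l] rank_minkowski_adjoint_le[of "P\<^sup>\<sim>" l k] assms
  by simp

lemma is_minkowski_inverse_unique:
  assumes X: "is_minkowski_inverse A X" and Y: "is_minkowski_inverse A Y"
  shows "X = Y"
proof -
  have [simp]: "dim_row X = dim_col A" "dim_col X = dim_row A"
    "dim_row Y = dim_col A" "dim_col Y = dim_row A"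
    using X Y unfolding is_minkowski_inverse_def by auto
  have AXA: "A * X * A = A" and XAX: "X * A * X = X"
    and AX: "X\<^sup>\<sim> * A\<^sup>\<sim> = A * X" and XA: "A\<^sup>\<sim> * X\<^sup>\<sim> = X * A"
    using X unfolding is_minkowski_inverse_def by (auto simp: minkowski_adjoint_mult)
  have AYA: "A * Y * A = A" and YAY: "Y * A * Y = Y"
    and AY: "Y\<^sup>\<sim> * A\<^sup>\<sim> = A * Y" and YA: "A\<^sup>\<sim> * Y\<^sup>\<sim> = Y * A"
    using Y unfolding is_minkowski_inverse_def by (auto simp: minkowski_adjoint_mult)
  have adj_AYA: "A\<^sup>\<sim> = A\<^sup>\<sim> * (A * Y)"
    using arg_cong[OF AYA, of minkowski_adjoint] AY
    by (simp add: minkowski_adjoint_mult mat_mult_assoc)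
  have adj_AXA: "A\<^sup>\<sim> = X * A * A\<^sup>\<sim>"
    using arg_cong[OF AXA, of minkowski_adjoint] XA
    by (simp add: minkowski_adjoint_mult flip: mat_mult_assoc)
  have "X = X * (X\<^sup>\<sim> * A\<^sup>\<sim>)" using XAX AX by (simp add: mat_mult_assoc)
  also have "\<dots> = X * (X\<^sup>\<sim> * A\<^sup>\<sim>) * (A * Y)"
    by (subst (1) adj_AYA) (simp add: mat_mult_assoc)
  also have "\<dots> = X * A * Y" using XAX AX by (simp add: mat_mult_assoc)
  finally have X_eq: "X = X * A * Y" .
  have "Y = A\<^sup>\<sim> * Y\<^sup>\<sim> * Y" using YAY YA by simp
  also have "\<dots> = X * A * (A\<^sup>\<sim> * Y\<^sup>\<sim>) * Y"
    by (subst (1) adj_AXA) (simp add: mat_mult_assoc)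
  also have "\<dots> = X * A * Y" using YAY YA by (simp add: mat_mult_assoc)
  finally show ?thesis using X_eq by simp
qed

lemma minkowski_inverse_eqI: "is_minkowski_inverse A X \<Longrightarrow> minkowski_inverse A = X"
  unfolding minkowski_inverse_def using is_minkowski_inverse_unique by blast

lemma is_minkowski_inverse_iff_factors:
  assumes A: "A \<in> carrier_mat m n" and X: "X \<in> carrier_mat n m"
  shows "is_minkowski_inverse A X \<longleftrightarrow> A * X * A = A \<and>
    (\<exists>B\<in>carrier_mat m m. X = A\<^sup>\<sim> * B) \<and> (\<exists>C\<in>carrier_mat n n. X = C * A\<^sup>\<sim>)"
  (is "_ \<longleftrightarrow> ?factors")
proof
  note dims [simp] = carrier_matD[OF A] carrier_matD[OF X]
  assume "is_minkowski_inverse A X"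
  then have AXA: "A * X * A = A" and XAX: "X * A * X = X"
    and AX: "X\<^sup>\<sim> * A\<^sup>\<sim> = A * X" and XA: "A\<^sup>\<sim> * X\<^sup>\<sim> = X * A"
    unfolding is_minkowski_inverse_def by (auto simp: minkowski_adjoint_mult)
  have "X = A\<^sup>\<sim> * (X\<^sup>\<sim> * X)"
    using XAX XA by (simp flip: mat_mult_assoc)
  moreover have "X = X * X\<^sup>\<sim> * A\<^sup>\<sim>"
    using XAX AX by (simp add: mat_mult_assoc)
  moreover have "X\<^sup>\<sim> * X \<in> carrier_mat m m" "X * X\<^sup>\<sim> \<in> carrier_mat n n"
    using X by auto
  ultimately show ?factors using AXA by blast
next
  assume ?factors
  then obtain B C where AXA: "A * X * A = A" and B: "B \<in> carrier_mat m m" "X = A\<^sup>\<sim> * B"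
    and C: "C \<in> carrier_mat n n" "X = C * A\<^sup>\<sim>"
    by blast
  note dims [simp] =
    carrier_matD[OF A] carrier_matD[OF X] carrier_matD[OF B(1)] carrier_matD[OF C(1)]
  have adj_AXA: "A\<^sup>\<sim> * X\<^sup>\<sim> * A\<^sup>\<sim> = A\<^sup>\<sim>"
    using arg_cong[OF AXA, of minkowski_adjoint]
    by (simp add: minkowski_adjoint_mult mat_mult_assoc)
  have "A * X = A * C * (A\<^sup>\<sim> * X\<^sup>\<sim> * A\<^sup>\<sim>)"
    using C(2) adj_AXA by (simp add: mat_mult_assoc)
  also have "\<dots> = A * X * (A * X)\<^sup>\<sim>"
    using C(2) by (simp add: minkowski_adjoint_mult mat_mult_assoc)
  finally have AX: "(A * X)\<^sup>\<sim> = A * X" by (rule minkowski_adjoint_fixed_of_eq_mult_adjoint)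
  have "X * A = A\<^sup>\<sim> * X\<^sup>\<sim> * A\<^sup>\<sim> * B * A" using B(2) adj_AXA by simp
  also have "\<dots> = (X * A)\<^sup>\<sim> * (X * A)"
    using B(2) by (simp add: minkowski_adjoint_mult mat_mult_assoc)
  finally have XA: "(X * A)\<^sup>\<sim> = X * A" by (rule minkowski_adjoint_fixed_of_eq_adjoint_mult)
  have "X * A * X = C * (A\<^sup>\<sim> * X\<^sup>\<sim> * A\<^sup>\<sim>)"
    using AX C(2) by (simp add: minkowski_adjoint_mult mat_mult_assoc)
  then have XAX: "X * A * X = X" using adj_AXA C(2) by simp
  show "is_minkowski_inverse A X"
    unfolding is_minkowski_inverse_def using X AXA XAX AX XA by simp
qed

lemma minkowski_rank_condition_factors:
  assumes A: "A \<in> carrier_mat m n"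
    and rk: "vec_space.rank n (A\<^sup>\<sim> * A * A\<^sup>\<sim>) = vec_space.rank m A"
  obtains U W where "U \<in> carrier_mat m m" "A\<^sup>\<sim> = A\<^sup>\<sim> * A * A\<^sup>\<sim> * U"
    and "W \<in> carrier_mat n n" "A = A * A\<^sup>\<sim> * A * W"
proof -
  have M: "A\<^sup>\<sim> \<in> carrier_mat n m" using A by simp
  have "vec_space.rank m (A * A\<^sup>\<sim> * A) = vec_space.rank n ((A * A\<^sup>\<sim> * A)\<^sup>\<sim>)"
    using rank_minkowski_adjoint[OF mult_carrier_mat[OF mult_carrier_mat[OF A M] A]] by simp
  also have "(A * A\<^sup>\<sim> * A)\<^sup>\<sim> = A\<^sup>\<sim> * A * A\<^sup>\<sim>"
    using A by (simp add: minkowski_adjoint_mult mat_mult_assoc)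
  finally have rank_AMA: "vec_space.rank m (A * A\<^sup>\<sim> * A) = vec_space.rank m A" using rk by simp
  obtain U where "U \<in> carrier_mat m m" "A\<^sup>\<sim> = A\<^sup>\<sim> * A * A\<^sup>\<sim> * U"
    using vec_space.factors_through_mult_of_rank_le[OF M mult_carrier_mat[OF A M]] rk
      rank_minkowski_adjoint[OF A] A by (auto simp: mat_mult_assoc)
  moreover obtain W where "W \<in> carrier_mat n n" "A = A * A\<^sup>\<sim> * A * W"
    using vec_space.factors_through_mult_of_rank_le[OF A mult_carrier_mat[OF M A]] rank_AMA
      A by (auto simp: mat_mult_assoc)
  ultimately show ?thesis using that by blast
qed

lemma is_minkowski_inverse_exists:
  assumes A: "A \<in> carrier_mat m n"
    and rk: "vec_space.rank n (A\<^sup>\<sim> * A * A\<^sup>\<sim>) = vec_space.rank m A"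
  shows "\<exists>X. is_minkowski_inverse A X"
proof -
  let ?M = "A\<^sup>\<sim>"
  obtain U W where U: "U \<in> carrier_mat m m" and M_eq: "?M = ?M * A * ?M * U"
    and W: "W \<in> carrier_mat n n" and A_eq: "A = A * ?M * A * W"
    using minkowski_rank_condition_factors[OF A rk] .
  note dims [simp] = carrier_matD[OF A] carrier_matD[OF U] carrier_matD[OF W]
  have M_eq': "?M = W\<^sup>\<sim> * ?M * A * ?M"
    using arg_cong[OF A_eq, of minkowski_adjoint]
    by (simp add: minkowski_adjoint_mult mat_mult_assoc)
  have A_eq': "A = U\<^sup>\<sim> * A * ?M * A"
    using arg_cong[OF M_eq, of minkowski_adjoint]
    by (simp add: minkowski_adjoint_mult mat_mult_assoc)
  have X: "?M * U \<in> carrier_mat n m" using mult_carrier_mat[OF minkowski_adjoint_carrier[OF A] U] .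
  have MAMU: "?M * (A * (?M * U)) = ?M" using M_eq by (simp add: mat_mult_assoc)
  have "?M * U = W\<^sup>\<sim> * ?M"
    by (subst (1) M_eq') (simp add: mat_mult_assoc MAMU)
  moreover have "A * (?M * U) * A = A"
  proof -
    have "A * (?M * U) * A = U\<^sup>\<sim> * A * (?M * A * ?M * U) * A"
      by (subst (1) A_eq') (simp add: mat_mult_assoc)
    then show ?thesis using MAMU A_eq'[symmetric] by (simp add: mat_mult_assoc)
  qed
  moreover have "W\<^sup>\<sim> \<in> carrier_mat n n" using W by simp
  ultimately have "is_minkowski_inverse A (?M * U)"
    using is_minkowski_inverse_iff_factors[OF A X] U by blast
  then show ?thesis by blast
qed

theorem theorem5p7:
  fixes A X :: "complex mat" and m n :: nat
  assumes "0 < m" and "0 < n"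
    and A: "A \<in> carrier_mat m n" and X: "X \<in> carrier_mat n m"
    and rk: "vec_space.rank n (minkowski_adjoint A * A * minkowski_adjoint A) = vec_space.rank m A"
  shows "(X = minkowski_inverse A \<longleftrightarrow>
           (\<exists>B \<in> carrier_mat m m. \<exists>C \<in> carrier_mat n n.
              A * X * A = A \<and> X = minkowski_adjoint A * B \<and> X = C * minkowski_adjoint A))
       \<and> (\<forall>G \<in> carrier_mat m n.
            minkowski_adjoint A * G * minkowski_adjoint A = minkowski_adjoint A \<longrightarrow>
            (\<forall>Y \<in> carrier_mat m m. \<forall>Z \<in> carrier_mat n n.
              (let B = G * minkowski_inverse A + (1\<^sub>m m - G * minkowski_adjoint A) * Y;
                   C = minkowski_inverse A * G + Z * (1\<^sub>m n - minkowski_adjoint A * G)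
               in A * minkowski_inverse A * A = A \<and>
                  minkowski_inverse A = minkowski_adjoint A * B \<and>
                  minkowski_inverse A = C * minkowski_adjoint A)))"
proof -
  let ?Am = "minkowski_inverse A"
  have inv: "is_minkowski_inverse A ?Am"
    using is_minkowski_inverse_exists[OF A rk] minkowski_inverse_eqI by metis
  then have Am: "?Am \<in> carrier_mat n m" using A unfolding is_minkowski_inverse_def by simp
  have "X = ?Am \<longleftrightarrow> is_minkowski_inverse A X"
    using inv minkowski_inverse_eqI by metis
  then have part1: "X = ?Am \<longleftrightarrow> (\<exists>B \<in> carrier_mat m m. \<exists>C \<in> carrier_mat n n.
      A * X * A = A \<and> X = A\<^sup>\<sim> * B \<and> X = C * A\<^sup>\<sim>)"
    using is_minkowski_inverse_iff_factors[OF A X] by blast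
  obtain B C where AAmA: "A * ?Am * A = A" and B: "B \<in> carrier_mat m m" "?Am = A\<^sup>\<sim> * B"
    and C: "C \<in> carrier_mat n n" "?Am = C * A\<^sup>\<sim>"
    using inv is_minkowski_inverse_iff_factors[OF A Am] by blast
  have "A\<^sup>\<sim> * (G * ?Am + (1\<^sub>m m - G * A\<^sup>\<sim>) * Y) = ?Am"
    and "(?Am * G + Z * (1\<^sub>m n - A\<^sup>\<sim> * G)) * A\<^sup>\<sim> = ?Am"
    if "G \<in> carrier_mat m n" "A\<^sup>\<sim> * G * A\<^sup>\<sim> = A\<^sup>\<sim>" "Y \<in> carrier_mat m m" "Z \<in> carrier_mat n n"
    for G Y Z
    using one_inverse_solves_left[of "A\<^sup>\<sim>" n m G B m Y]
      one_inverse_solves_right[of "A\<^sup>\<sim>" n m G C n Z] that A B C by simp_all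
  with part1 AAmA show ?thesis by (simp add: Let_def)
qed

end
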